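(* Let $P'$ be any transition kernel, i.e. $P'\in\mathbb R_+^{\mathcal S\times\mathcal A\times\mathcal S}$ with $\sum_{s'}P'(s'|s,a)=1$ for all $s,a$, and let $\pi:\mathcal S\to\Delta(\mathcal A)$ be any stationary policy. Then $\|\rho^{P,\pi}-\rho^{P',\pi}\|_1\le\frac{1}{\alpha S}\sum_{s\in\mathcal S,a\in\mathcal A}\rho^{P',\pi}(s,a)\sum_{s'\in\mathcal S}|P(s'|s,a)-P'(s'|s,a)|$.
   Context: $\mathcal S,\mathcal A$ finite with $S=|\mathcal S|$; $P$ is a transition kernel with $P(s'|s,a)\ge\alpha>0$ for all $s,s',a$. For a transition kernel $Q$ and stationary policy $\pi$, the state-action occupancy measure is $\rho^{Q,\pi}(s,a)=\lim_{T\to\infty}\frac1T\sum_{t=1}^T\Pr(s^t=s,a^t=a)$ for the process $a^t\sim\pi(\cdot|s^t)$, $s^{t+1}\sim Q(\cdot|s^t,a^t)$; equivalently $\rho^{Q,\pi}(s,a)=\nu^{Q,\pi}(s)\pi(a|s)$ with $\nu^{Q,\pi}$ the corresponding long-run state frequencies, which form a stationary distribution of the chain $Q^\pi(s'|s)=\sum_a Q(s'|s,a)\pi(a|s)$. *)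

theory Defs
  imports Complex_Main
begin

text \<open>Kernels are encoded as Q s a s' = Q(s'|s,a); policies as pol s a = pol(a|s).\<close>

definition is_kernel :: "('s::finite \<Rightarrow> 'a::finite \<Rightarrow> 's \<Rightarrow> real) \<Rightarrow> bool" where
  "is_kernel Q \<longleftrightarrow> (\<forall>s a s'. Q s a s' \<ge> 0) \<and> (\<forall>s a. (\<Sum>s'\<in>UNIV. Q s a s') = 1)"

definition is_policy :: "('s::finite \<Rightarrow> 'a::finite \<Rightarrow> real) \<Rightarrow> bool" where
  "is_policy pol \<longleftrightarrow> (\<forall>s a. pol s a \<ge> 0) \<and> (\<forall>s. (\<Sum>a\<in>UNIV. pol s a) = 1)"

definition is_distribution :: "('s::finite \<Rightarrow> real) \<Rightarrow> bool" where
  "is_distribution mu \<longleftrightarrow> (\<forall>s. mu s \<ge> 0) \<and> (\<Sum>s\<in>UNIV. mu s) = 1"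

definition state_chain :: "('s::finite \<Rightarrow> 'a::finite \<Rightarrow> 's \<Rightarrow> real) \<Rightarrow> ('s \<Rightarrow> 'a \<Rightarrow> real) \<Rightarrow> 's \<Rightarrow> 's \<Rightarrow> real" where
  "state_chain Q pol s s' = (\<Sum>a\<in>UNIV. pol s a * Q s a s')"

text \<open>state_dist Q pol mu n s = Pr(s^{n+1} = s) when s^1 ~ mu.\<close>
fun state_dist :: "('s::finite \<Rightarrow> 'a::finite \<Rightarrow> 's \<Rightarrow> real) \<Rightarrow> ('s \<Rightarrow> 'a \<Rightarrow> real) \<Rightarrow> ('s \<Rightarrow> real) \<Rightarrow> nat \<Rightarrow> 's \<Rightarrow> real" where
  "state_dist Q pol mu 0 = mu"
| "state_dist Q pol mu (Suc n) = (\<lambda>s'. \<Sum>s\<in>UNIV. state_dist Q pol mu n s * state_chain Q pol s s')"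

definition occupancy :: "('s::finite \<Rightarrow> 'a::finite \<Rightarrow> 's \<Rightarrow> real) \<Rightarrow> ('s \<Rightarrow> 'a \<Rightarrow> real) \<Rightarrow> ('s \<Rightarrow> real) \<Rightarrow> 's \<Rightarrow> 'a \<Rightarrow> real" where
  "occupancy Q pol mu s a = lim (\<lambda>T. (\<Sum>t<T. state_dist Q pol mu t s * pol s a) / real T)"

end

theory Submission
  imports Defs "HOL-Analysis.Analysis"
begin

(*
  The occupancy measure of a kernel Q factors as \<nu>(s) pol(s,a), where \<nu> is the Cesaro limit of
  the state distributions. The limit exists by the mean ergodic theorem: the transition operator
  f of a stochastic matrix has bounded orbits, so every vector is a fixed point of f plus an
  element of the range of f - id, whose Cesaro means telescope to 0; hence the limit is stationary.
  For stationary distributions \<nu>, \<nu>' of M = P\<^sup>\<pi> and M' = P'\<^sup>\<pi>, the difference d = \<nu> - \<nu>'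
  satisfies d = d M + \<nu>' (M - M'). All entries of M are at least \<alpha> and d sums to zero, so
  d \<mapsto> d M contracts the l1 norm by the factor 1 - \<alpha> S (Doeblin), which gives
  \<alpha> S |d|\<^sub>1 \<le> |\<nu>' (M - M')|\<^sub>1.
*)

definition cesaro_mean :: "('a::real_vector \<Rightarrow> 'a) \<Rightarrow> 'a \<Rightarrow> nat \<Rightarrow> 'a" where
  "cesaro_mean f x T = (1 / real T) *\<^sub>R (\<Sum>t<T. (f ^^ t) x)"

lemma linear_funpow:
  fixes f :: "'a::real_vector \<Rightarrow> 'a"
  assumes "linear f"
  shows "linear (f ^^ n)"
proof (induction n)
  case 0
  then show ?case by (simp add: linear_ident)
next
  case (Suc n)
  then show ?case using linear_compose[OF Suc assms] by (simp only: funpow.simps(2))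
qed

lemma funpow_fixed_point: "f k = k \<Longrightarrow> (f ^^ t) k = k"
  by (induction t) simp_all

lemma cesaro_mean_fixed_point_plus_coboundary:
  fixes f :: "'a::real_vector \<Rightarrow> 'a"
  assumes lin: "linear f" and fixed: "f k = k" and T: "T > 0"
  shows "cesaro_mean f (k + (f y - y)) T = k + (1 / real T) *\<^sub>R ((f ^^ T) y - y)"
proof -
  have "(f ^^ t) (k + (f y - y)) = k + ((f ^^ Suc t) y - (f ^^ t) y)" for t
    using linear_funpow[OF lin, of t] funpow_fixed_point[of f k t, OF fixed]
    by (simp add: linear_add linear_diff funpow_swap1)
  then have "(\<Sum>t<T. (f ^^ t) (k + (f y - y))) = (\<Sum>t<T. k) + (\<Sum>t<T. (f ^^ Suc t) y - (f ^^ t) y)"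
    by (simp only: sum.distrib)
  also have "\<dots> = real T *\<^sub>R k + ((f ^^ T) y - y)"
    using sum_lessThan_telescope[of "\<lambda>t. (f ^^ t) y" T] by (simp add: sum_constant_scaleR)
  finally have "(\<Sum>t<T. (f ^^ t) (k + (f y - y))) = real T *\<^sub>R k + ((f ^^ T) y - y)" .
  then show ?thesis using T by (simp add: cesaro_mean_def scaleR_add_right)
qed

context
  fixes f :: "'a::euclidean_space \<Rightarrow> 'a"
  assumes lin: "linear f"
    and bounded_orbit: "\<And>x. bounded (range (\<lambda>t. (f ^^ t) x))"
begin

lemma fixed_point_in_range_eq_0:
  assumes fixed: "f x = x" and range: "x = f y - y"
  shows "x = 0"
proof -
  have orbit: "(f ^^ t) y = y + real t *\<^sub>R x" for t
  proof (induction t)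
    case (Suc t)
    have "(f ^^ Suc t) y = f y + real t *\<^sub>R f x"
      using Suc by (simp add: linear_add[OF lin] linear_scale[OF lin])
    moreover have "f y = y + x" using range by simp
    ultimately show ?case using fixed by (simp add: algebra_simps)
  qed simp
  obtain B where B: "\<And>t. norm ((f ^^ t) y) \<le> B"
    using bounded_orbit[of y] by (auto simp: bounded_iff)
  have "norm x \<le> (B + norm y) / real t" if "t > 0" for t
  proof -
    have "real t * norm x = norm ((f ^^ t) y - y)" by (simp add: orbit)
    also have "\<dots> \<le> B + norm y" using B[of t] norm_triangle_ineq4[of "(f ^^ t) y" y] by linarith
    finally show ?thesis using that by (simp add: field_simps)
  qed
  then have "norm x \<le> 0"
    by (intro LIMSEQ_le_const[OF lim_const_over_n[of "B + norm y"]])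
       (auto intro!: exI[of _ 1])
  then show ?thesis by simp
qed

lemma fixed_point_plus_range:
  obtains k y where "f k = k" and "x = k + (f y - y)"
proof -
  define g where "g x = f x - x" for x
  have lin_g: "linear g" unfolding g_def using lin by (intro linear_compose_sub linear_ident)
  have sub: "subspace (range g)" using lin_g subspace_UNIV by (rule linear_subspace_image)
  have "inj_on g (range g)"
  proof (rule inj_onI)
    fix u v assume u: "u \<in> range g" and v: "v \<in> range g" and eq: "g u = g v"
    obtain w where w: "u - v = g w" using subspace_diff[OF sub u v] by blast
    have "g (u - v) = 0" using eq by (simp add: linear_diff[OF lin_g])
    then have "u - v = 0"
      using fixed_point_in_range_eq_0[of "u - v" w] w by (simp add: g_def)
    then show "u = v" by simp
  qed
  \<comment> \<open>Being injective on its range, g maps the range onto itself by a dimension count.\<close>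
  moreover have "span (range g) = range g" using sub by (simp add: span_eq_iff)
  ultimately have "dim (g ` range g) = dim (range g)"
    using dim_image_eq[OF lin_g, of "range g"] by argo
  then have "g ` range g = range g"
    using subspace_dim_equal[OF linear_subspace_image[OF lin_g sub] sub] by force
  then obtain y where "g x = g (g y)" by (metis rangeI imageE)
  then have "g (x - g y) = 0" by (simp add: linear_diff[OF lin_g])
  then show ?thesis using that[of "x - g y" y] unfolding g_def by simp
qed

theorem cesaro_mean_converges_to_fixed_point:
  obtains L where "cesaro_mean f x \<longlonglongrightarrow> L" and "f L = L"
proof -
  obtain k y where fixed: "f k = k" and x: "x = k + (f y - y)"
    using fixed_point_plus_range by blast
  obtain B where B: "\<And>t. norm ((f ^^ t) y) \<le> B"
    using bounded_orbit[of y] by (auto simp: bounded_iff)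
  have "(\<lambda>T. (1 / real T) *\<^sub>R ((f ^^ T) y - y)) \<longlonglongrightarrow> 0"
  proof (rule Lim_null_comparison)
    show "\<forall>\<^sub>F T in sequentially. norm ((1 / real T) *\<^sub>R ((f ^^ T) y - y)) \<le> (B + norm y) / real T"
      using order.trans[OF norm_triangle_ineq4 add_right_mono[OF B]]
      by (intro always_eventually allI) (simp add: divide_right_mono)
  qed (rule lim_const_over_n)
  then have "(\<lambda>T. k + (1 / real T) *\<^sub>R ((f ^^ T) y - y)) \<longlonglongrightarrow> k"
    using tendsto_add[OF tendsto_const] by fastforce
  moreover have "\<forall>\<^sub>F T in sequentially. k + (1 / real T) *\<^sub>R ((f ^^ T) y - y) = cesaro_mean f x T"
    using cesaro_mean_fixed_point_plus_coboundary[OF lin fixed] x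
    by (intro eventually_sequentiallyI[of 1]) simp
  ultimately show ?thesis using that fixed Lim_transform_eventually by blast
qed

end

lemma sum_abs_vector_matrix_le:
  fixes A :: "real^'n^'m"
  assumes nonneg: "\<And>i j. A$i$j \<ge> 0" and row_sum: "\<And>i. (\<Sum>j\<in>UNIV. A$i$j) = 1"
  shows "(\<Sum>j\<in>UNIV. \<bar>(x v* A)$j\<bar>) \<le> (\<Sum>i\<in>UNIV. \<bar>x$i\<bar>)"
proof -
  have "(\<Sum>j\<in>UNIV. \<bar>(x v* A)$j\<bar>) \<le> (\<Sum>j\<in>UNIV. \<Sum>i\<in>UNIV. \<bar>x$i\<bar> * A$i$j)"
    unfolding vector_matrix_mult_def vec_lambda_beta
    by (intro sum_mono order.trans[OF sum_abs]) (simp add: abs_mult nonneg)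
  also have "\<dots> = (\<Sum>i\<in>UNIV. \<bar>x$i\<bar> * (\<Sum>j\<in>UNIV. A$i$j))"
    by (subst sum.swap) (simp add: sum_distrib_left)
  finally show ?thesis by (simp add: row_sum)
qed

lemma stochastic_matrix_orbit_bounded:
  fixes A :: "real^'n^'n"
  assumes nonneg: "\<And>i j. A$i$j \<ge> 0" and row_sum: "\<And>i. (\<Sum>j\<in>UNIV. A$i$j) = 1"
  shows "bounded (range (\<lambda>t. ((\<lambda>x. x v* A) ^^ t) x))"
proof -
  have "(\<Sum>i\<in>UNIV. \<bar>(((\<lambda>x. x v* A) ^^ t) x)$i\<bar>) \<le> (\<Sum>i\<in>UNIV. \<bar>x$i\<bar>)" for t
    by (induction t) (auto intro: order.trans[OF sum_abs_vector_matrix_le[OF assms]])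
  then show ?thesis
    by (intro boundedI[of _ "\<Sum>i\<in>UNIV. \<bar>x$i\<bar>"]) (auto intro: order.trans[OF norm_le_l1_cart])
qed

definition stationary :: "('s::finite \<Rightarrow> 's \<Rightarrow> real) \<Rightarrow> ('s \<Rightarrow> real) \<Rightarrow> bool" where
  "stationary M \<nu> \<longleftrightarrow> (\<forall>s'. \<nu> s' = (\<Sum>s\<in>UNIV. \<nu> s * M s s'))"

lemma state_chain_nonneg:
  assumes "is_kernel Q" "is_policy pol"
  shows "state_chain Q pol s s' \<ge> 0"
  using assms by (auto simp: is_kernel_def is_policy_def state_chain_def intro!: sum_nonneg)

lemma state_chain_row_sum:
  assumes "is_kernel Q" "is_policy pol"
  shows "(\<Sum>s'\<in>UNIV. state_chain Q pol s s') = 1"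
proof -
  have "(\<Sum>s'\<in>UNIV. state_chain Q pol s s') = (\<Sum>a\<in>UNIV. pol s a * (\<Sum>s'\<in>UNIV. Q s a s'))"
    unfolding state_chain_def by (subst sum.swap) (simp add: sum_distrib_left)
  also have "\<dots> = 1" using assms by (simp add: is_kernel_def is_policy_def)
  finally show ?thesis .
qed

lemma state_chain_ge:
  assumes "is_policy pol" and "\<And>s a s'. \<alpha> \<le> P s a s'"
  shows "\<alpha> \<le> state_chain P pol s s'"
proof -
  have "(\<Sum>a\<in>UNIV. pol s a * \<alpha>) \<le> state_chain P pol s s'"
    unfolding state_chain_def using assms
    by (intro sum_mono mult_left_mono) (auto simp: is_policy_def)
  then show ?thesis using assms(1) by (simp add: is_policy_def sum_distrib_right[symmetric])
qed

lemma state_dist_nonneg: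
  assumes "is_kernel Q" "is_policy pol" "is_distribution mu"
  shows "state_dist Q pol mu t s \<ge> 0"
  using assms
  by (induction t arbitrary: s)
     (auto simp: is_distribution_def intro!: sum_nonneg mult_nonneg_nonneg state_chain_nonneg)

lemma sum_state_dist:
  assumes "is_kernel Q" "is_policy pol" "is_distribution mu"
  shows "(\<Sum>s\<in>UNIV. state_dist Q pol mu t s) = 1"
proof (induction t)
  case 0
  then show ?case using assms by (simp add: is_distribution_def)
next
  case (Suc t)
  have "(\<Sum>s'\<in>UNIV. state_dist Q pol mu (Suc t) s')
      = (\<Sum>s\<in>UNIV. state_dist Q pol mu t s * (\<Sum>s'\<in>UNIV. state_chain Q pol s s'))"
    by (simp add: sum_distrib_left) (rule sum.swap)
  then show ?case using Suc state_chain_row_sum[OF assms(1,2)] by simp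
qed

lemma state_dist_cesaro_converges:
  fixes Q :: "'s::finite \<Rightarrow> 'a::finite \<Rightarrow> 's \<Rightarrow> real"
  assumes "is_kernel Q" "is_policy pol"
  obtains \<nu> where "\<And>s. (\<lambda>T. (\<Sum>t<T. state_dist Q pol mu t s) / real T) \<longlonglongrightarrow> \<nu> s"
    and "stationary (state_chain Q pol) \<nu>"
proof -
  define A :: "real^'s^'s" where "A = (\<chi> s s'. state_chain Q pol s s')"
  define step where "step x = x v* A" for x
  have lin: "linear step"
    unfolding step_def transpose_matrix_vector[symmetric] by (rule matrix_vector_mul_linear)
  have bounded: "bounded (range (\<lambda>t. (step ^^ t) x))" for x
    unfolding step_def[abs_def] using assms
    by (intro stochastic_matrix_orbit_bounded) (simp_all add: A_def state_chain_nonneg state_chain_row_sum)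
  have orbit: "(step ^^ t) (\<chi> s. mu s) $ s = state_dist Q pol mu t s" for t s
    by (induction t arbitrary: s) (simp_all add: step_def vector_matrix_mult_def A_def)
  obtain L where L: "cesaro_mean step (\<chi> s. mu s) \<longlonglongrightarrow> L" and fixed: "step L = L"
    using cesaro_mean_converges_to_fixed_point[OF lin bounded] by blast
  show ?thesis
  proof
    show "(\<lambda>T. (\<Sum>t<T. state_dist Q pol mu t s) / real T) \<longlonglongrightarrow> L $ s" for s
      using tendsto_vec_nth[OF L, of s] by (simp add: cesaro_mean_def orbit sum_component)
    show "stationary (state_chain Q pol) (\<lambda>s. L $ s)"
      using fixed by (auto simp: stationary_def step_def vector_matrix_mult_def A_def vec_eq_iff)
  qed
qed

lemma occupancy_factorization:
  fixes Q :: "'s::finite \<Rightarrow> 'a::finite \<Rightarrow> 's \<Rightarrow> real"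
  assumes "is_kernel Q" "is_policy pol" "is_distribution mu"
  obtains \<nu> where "\<And>s a. occupancy Q pol mu s a = \<nu> s * pol s a"
    and "stationary (state_chain Q pol) \<nu>" and "is_distribution \<nu>"
proof -
  obtain \<nu> where lim: "\<And>s. (\<lambda>T. (\<Sum>t<T. state_dist Q pol mu t s) / real T) \<longlonglongrightarrow> \<nu> s"
    and stat: "stationary (state_chain Q pol) \<nu>"
    using state_dist_cesaro_converges[OF assms(1,2)] by blast
  have "occupancy Q pol mu s a = \<nu> s * pol s a" for s a
    unfolding occupancy_def
    by (rule limI) (use tendsto_mult_right[OF lim[of s], of "pol s a"] in \<open>simp add: sum_distrib_right\<close>)
  moreover have "\<nu> s \<ge> 0" for s
    by (rule LIMSEQ_le_const[OF lim])
       (auto intro!: divide_nonneg_nonneg sum_nonneg state_dist_nonneg[OF assms])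
  moreover have "(\<Sum>s\<in>UNIV. \<nu> s) = 1"
  proof (rule LIMSEQ_unique[OF tendsto_sum[OF lim]])
    have "(\<Sum>s\<in>UNIV. \<Sum>t<T. state_dist Q pol mu t s) = real T" for T
      by (subst sum.swap) (simp add: sum_state_dist[OF assms])
    then have "(\<Sum>s\<in>UNIV. (\<Sum>t<T. state_dist Q pol mu t s) / real T) = 1" if "T \<ge> 1" for T
      using that by (simp add: sum_divide_distrib[symmetric])
    then show "(\<lambda>T. \<Sum>s\<in>UNIV. (\<Sum>t<T. state_dist Q pol mu t s) / real T) \<longlonglongrightarrow> 1"
      by (intro Lim_transform_eventually[OF tendsto_const] eventually_sequentiallyI) (rule sym)
  qed
  ultimately show ?thesis using that[of \<nu>] stat by (simp add: is_distribution_def)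
qed

lemma minorized_chain_l1_contraction:
  fixes M :: "'s::finite \<Rightarrow> 's \<Rightarrow> real"
  assumes row_sum: "\<And>s. (\<Sum>s'\<in>UNIV. M s s') = 1" and minorized: "\<And>s s'. \<alpha> \<le> M s s'"
    and sum_zero: "(\<Sum>s\<in>UNIV. d s) = 0"
  shows "(\<Sum>s'\<in>UNIV. \<bar>\<Sum>s\<in>UNIV. d s * M s s'\<bar>) \<le> (1 - \<alpha> * CARD('s)) * (\<Sum>s\<in>UNIV. \<bar>d s\<bar>)"
proof -
  \<comment> \<open>As d sums to 0, lowering every entry of M by \<alpha> leaves d M unchanged and keeps M nonnegative.\<close>
  have "(\<Sum>s\<in>UNIV. d s * M s s') = (\<Sum>s\<in>UNIV. d s * (M s s' - \<alpha>))" for s'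
    using sum_zero by (simp add: right_diff_distrib sum_subtractf sum_distrib_right[symmetric])
  then have "(\<Sum>s'\<in>UNIV. \<bar>\<Sum>s\<in>UNIV. d s * M s s'\<bar>) \<le> (\<Sum>s'\<in>UNIV. \<Sum>s\<in>UNIV. \<bar>d s\<bar> * (M s s' - \<alpha>))"
    using minorized by (intro sum_mono) (simp add: order.trans[OF sum_abs] abs_mult)
  also have "\<dots> = (\<Sum>s\<in>UNIV. \<bar>d s\<bar> * (1 - \<alpha> * CARD('s)))"
    by (subst sum.swap) (simp add: sum_distrib_left[symmetric] sum_subtractf row_sum mult.commute)
  finally show ?thesis by (simp add: sum_distrib_right[symmetric] mult.commute)
qed

lemma stationary_l1_perturbation:
  fixes M M' :: "'s::finite \<Rightarrow> 's \<Rightarrow> real"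
  assumes row_sum: "\<And>s. (\<Sum>s'\<in>UNIV. M s s') = 1" and minorized: "\<And>s s'. \<alpha> \<le> M s s'"
    and stat: "stationary M \<nu>" and stat': "stationary M' \<nu>'"
    and same_mass: "(\<Sum>s\<in>UNIV. \<nu> s) = (\<Sum>s\<in>UNIV. \<nu>' s)"
  shows "\<alpha> * CARD('s) * (\<Sum>s\<in>UNIV. \<bar>\<nu> s - \<nu>' s\<bar>)
    \<le> (\<Sum>s'\<in>UNIV. \<bar>\<Sum>s\<in>UNIV. \<nu>' s * (M s s' - M' s s')\<bar>)"
proof -
  define d where "d s = \<nu> s - \<nu>' s" for s
  define E where "E = (\<Sum>s'\<in>UNIV. \<bar>\<Sum>s\<in>UNIV. \<nu>' s * (M s s' - M' s s')\<bar>)"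
  define D where "D = (\<Sum>s\<in>UNIV. \<bar>d s\<bar>)"
  have d_eq: "d s' = (\<Sum>s\<in>UNIV. d s * M s s') + (\<Sum>s\<in>UNIV. \<nu>' s * (M s s' - M' s s'))" for s'
  proof -
    have "\<nu> s' = (\<Sum>s\<in>UNIV. \<nu> s * M s s')" and "\<nu>' s' = (\<Sum>s\<in>UNIV. \<nu>' s * M' s s')"
      using stat stat' unfolding stationary_def by blast+
    then show ?thesis
      by (simp add: d_def sum.distrib[symmetric] sum_subtractf[symmetric] algebra_simps)
  qed
  have "\<bar>d s'\<bar> \<le> \<bar>\<Sum>s\<in>UNIV. d s * M s s'\<bar> + \<bar>\<Sum>s\<in>UNIV. \<nu>' s * (M s s' - M' s s')\<bar>" for s'
    by (subst d_eq) (rule abs_triangle_ineq)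
  then have "D \<le> (\<Sum>s'\<in>UNIV. \<bar>\<Sum>s\<in>UNIV. d s * M s s'\<bar>) + E"
    unfolding D_def E_def by (simp add: sum.distrib[symmetric] sum_mono)
  also have "(\<Sum>s'\<in>UNIV. \<bar>\<Sum>s\<in>UNIV. d s * M s s'\<bar>) \<le> (1 - \<alpha> * CARD('s)) * D"
    unfolding D_def using same_mass
    by (intro minorized_chain_l1_contraction row_sum minorized) (simp add: d_def sum_subtractf)
  finally have "\<alpha> * CARD('s) * D \<le> E" by (simp add: algebra_simps)
  then show ?thesis by (simp add: D_def E_def d_def)
qed

lemma sum_abs_state_chain_diff_le:
  assumes "is_policy pol" and "\<And>s. \<nu> s \<ge> 0"
  shows "(\<Sum>s'\<in>UNIV. \<bar>\<Sum>s\<in>UNIV. \<nu> s * (state_chain P pol s s' - state_chain P' pol s s')\<bar>)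
    \<le> (\<Sum>s\<in>UNIV. \<Sum>a\<in>UNIV. \<nu> s * pol s a * (\<Sum>s'\<in>UNIV. \<bar>P s a s' - P' s a s'\<bar>))"
proof -
  have "\<bar>\<Sum>s\<in>UNIV. \<nu> s * (state_chain P pol s s' - state_chain P' pol s s')\<bar>
      \<le> (\<Sum>s\<in>UNIV. \<Sum>a\<in>UNIV. \<nu> s * pol s a * \<bar>P s a s' - P' s a s'\<bar>)" for s'
  proof -
    have "(\<Sum>s\<in>UNIV. \<nu> s * (state_chain P pol s s' - state_chain P' pol s s'))
        = (\<Sum>s\<in>UNIV. \<Sum>a\<in>UNIV. \<nu> s * pol s a * (P s a s' - P' s a s'))"
      by (simp add: state_chain_def sum_distrib_left algebra_simps sum_subtractf)
    also have "\<bar>\<dots>\<bar> \<le> (\<Sum>s\<in>UNIV. \<Sum>a\<in>UNIV. \<bar>\<nu> s * pol s a * (P s a s' - P' s a s')\<bar>)"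
      by (rule order.trans[OF sum_abs]) (intro sum_mono sum_abs)
    finally show ?thesis
      using assms by (simp add: abs_mult is_policy_def)
  qed
  then have "(\<Sum>s'\<in>UNIV. \<bar>\<Sum>s\<in>UNIV. \<nu> s * (state_chain P pol s s' - state_chain P' pol s s')\<bar>)
      \<le> (\<Sum>s'\<in>UNIV. \<Sum>s\<in>UNIV. \<Sum>a\<in>UNIV. \<nu> s * pol s a * \<bar>P s a s' - P' s a s'\<bar>)"
    by (rule sum_mono)
  also have "\<dots> = (\<Sum>s\<in>UNIV. \<Sum>s'\<in>UNIV. \<Sum>a\<in>UNIV. \<nu> s * pol s a * \<bar>P s a s' - P' s a s'\<bar>)"
    by (rule sum.swap)
  also have "\<dots> = (\<Sum>s\<in>UNIV. \<Sum>a\<in>UNIV. \<Sum>s'\<in>UNIV. \<nu> s * pol s a * \<bar>P s a s' - P' s a s'\<bar>)"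
    by (intro sum.cong refl sum.swap)
  also have "\<dots> = (\<Sum>s\<in>UNIV. \<Sum>a\<in>UNIV. \<nu> s * pol s a * (\<Sum>s'\<in>UNIV. \<bar>P s a s' - P' s a s'\<bar>))"
    by (simp add: sum_distrib_left)
  finally show ?thesis .
qed

lemma sum_abs_policy_weighted:
  assumes "is_policy pol"
  shows "(\<Sum>s\<in>UNIV. \<Sum>a\<in>UNIV. \<bar>x s * pol s a\<bar>) = (\<Sum>s\<in>UNIV. \<bar>x s\<bar>)"
  using assms by (simp add: is_policy_def abs_mult sum_distrib_left[symmetric])

theorem lemma8:
  fixes P P' :: "'s::finite \<Rightarrow> 'a::finite \<Rightarrow> 's \<Rightarrow> real"
    and pol :: "'s \<Rightarrow> 'a \<Rightarrow> real"
    and mu mu' :: "'s \<Rightarrow> real"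
    and \<alpha> :: real
  assumes "is_kernel P"
    and "\<alpha> > 0"
    and "\<forall>s a s'. P s a s' \<ge> \<alpha>"
    and "is_kernel P'"
    and "is_policy pol"
    and "is_distribution mu"
    and "is_distribution mu'"
  shows "(\<Sum>s\<in>UNIV. \<Sum>a\<in>UNIV. \<bar>occupancy P pol mu s a - occupancy P' pol mu' s a\<bar>)
     \<le> 1 / (\<alpha> * real (card (UNIV :: 's set))) *
        (\<Sum>s\<in>UNIV. \<Sum>a\<in>UNIV. occupancy P' pol mu' s a *
           (\<Sum>s'\<in>UNIV. \<bar>P s a s' - P' s a s'\<bar>))"
proof -
  obtain \<nu> where occ: "\<And>s a. occupancy P pol mu s a = \<nu> s * pol s a"
    and stat: "stationary (state_chain P pol) \<nu>" and dist: "is_distribution \<nu>"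
    using occupancy_factorization[OF assms(1,5,6)] by blast
  obtain \<nu>' where occ': "\<And>s a. occupancy P' pol mu' s a = \<nu>' s * pol s a"
    and stat': "stationary (state_chain P' pol) \<nu>'" and dist': "is_distribution \<nu>'"
    using occupancy_factorization[OF assms(4,5,7)] by blast
  have "\<alpha> * CARD('s) * (\<Sum>s\<in>UNIV. \<bar>\<nu> s - \<nu>' s\<bar>)
      \<le> (\<Sum>s'\<in>UNIV. \<bar>\<Sum>s\<in>UNIV. \<nu>' s * (state_chain P pol s s' - state_chain P' pol s s')\<bar>)"
    using assms(1,3,5) dist dist'
    by (intro stationary_l1_perturbation[OF _ _ stat stat'])
       (simp_all add: state_chain_row_sum state_chain_ge is_distribution_def)
  also have "\<dots> \<le> (\<Sum>s\<in>UNIV. \<Sum>a\<in>UNIV. \<nu>' s * pol s a * (\<Sum>s'\<in>UNIV. \<bar>P s a s' - P' s a s'\<bar>))"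
    using assms(5) dist' by (intro sum_abs_state_chain_diff_le) (simp_all add: is_distribution_def)
  finally show ?thesis
    using assms(2) sum_abs_policy_weighted[OF assms(5), of "\<lambda>s. \<nu> s - \<nu>' s"]
    by (simp add: occ occ' left_diff_distrib[symmetric] pos_le_divide_eq mult_ac)
qed

end
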